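(* For every monotone submodular $f:2^{[2]}\to\mathbb{R}_+$ and every $\mathbf{x}\in[0,1]^2$, $f^{+}(\mathbf{x})/f^{++}(\mathbf{x})\le 4/3$ (with the convention $0/0=1$).
   Context: $[n]=\{1,\dots,n\}$. A set function $f:2^{[n]}\to\mathbb{R}_+$ is monotone if $f(S)\le f(T)$ for $S\subseteq T$, submodular if $f(S)+f(T)\ge f(S\cap T)+f(S\cup T)$. For $\mathbf{x}\in[0,1]^n$: the concave closure $f^{+}(\mathbf{x})=\max\sum_{S\subseteq[n]}\theta(S)f(S)$ over $\theta:2^{[n]}\to\mathbb{R}_{\ge0}$ with $\sum_S\theta(S)=1$ and $\sum_{S\ni i}\theta(S)=x_i$ for all $i$; the upper pairwise independent extension $f^{++}(\mathbf{x})$ is the same maximum with the additional constraints $\sum_{S\ni i,j}\theta(S)=x_ix_j$ for all $i<j$. *)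

theory Defs
  imports "HOL-Analysis.Analysis"
begin

text \<open>Ground set [n] = {1..n}; set functions are f :: nat set \<Rightarrow> real,
  only their values on subsets of {1..n} matter.\<close>

definition monotone_setfun :: "nat \<Rightarrow> (nat set \<Rightarrow> real) \<Rightarrow> bool" where
  "monotone_setfun n f \<longleftrightarrow>
     (\<forall>S T. S \<subseteq> T \<and> T \<subseteq> {1..n} \<longrightarrow> f S \<le> f T)"

definition submodular_setfun :: "nat \<Rightarrow> (nat set \<Rightarrow> real) \<Rightarrow> bool" where
  "submodular_setfun n f \<longleftrightarrow>
     (\<forall>S T. S \<subseteq> {1..n} \<and> T \<subseteq> {1..n} \<longrightarrow> f S + f T \<ge> f (S \<inter> T) + f (S \<union> T))"

definition nonneg_setfun :: "nat \<Rightarrow> (nat set \<Rightarrow> real) \<Rightarrow> bool" where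
  "nonneg_setfun n f \<longleftrightarrow> (\<forall>S. S \<subseteq> {1..n} \<longrightarrow> f S \<ge> 0)"

definition marg_feasible :: "nat \<Rightarrow> (nat \<Rightarrow> real) \<Rightarrow> (nat set \<Rightarrow> real) \<Rightarrow> bool" where
  "marg_feasible n x \<theta> \<longleftrightarrow>
     (\<forall>S\<in>Pow {1..n}. \<theta> S \<ge> 0) \<and>
     (\<Sum>S\<in>Pow {1..n}. \<theta> S) = 1 \<and>
     (\<forall>i\<in>{1..n}. (\<Sum>S\<in>{S\<in>Pow {1..n}. i \<in> S}. \<theta> S) = x i)"

definition pairwise_feasible :: "nat \<Rightarrow> (nat \<Rightarrow> real) \<Rightarrow> (nat set \<Rightarrow> real) \<Rightarrow> bool" where
  "pairwise_feasible n x \<theta> \<longleftrightarrow>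
     marg_feasible n x \<theta> \<and>
     (\<forall>i\<in>{1..n}. \<forall>j\<in>{1..n}. i < j \<longrightarrow>
        (\<Sum>S\<in>{S\<in>Pow {1..n}. i \<in> S \<and> j \<in> S}. \<theta> S) = x i * x j)"

text \<open>Concave closure f^+ (the maximum, written as a supremum; it is attained).\<close>
definition concave_closure :: "nat \<Rightarrow> (nat set \<Rightarrow> real) \<Rightarrow> (nat \<Rightarrow> real) \<Rightarrow> real" where
  "concave_closure n f x =
     Sup {(\<Sum>S\<in>Pow {1..n}. \<theta> S * f S) | \<theta>. marg_feasible n x \<theta>}"

definition upper_pi_ext :: "nat \<Rightarrow> (nat set \<Rightarrow> real) \<Rightarrow> (nat \<Rightarrow> real) \<Rightarrow> real" where
  "upper_pi_ext n f x =
     Sup {(\<Sum>S\<in>Pow {1..n}. \<theta> S * f S) | \<theta>. pairwise_feasible n x \<theta>}"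

end

theory Submission
  imports Defs
begin

text \<open>On a two-element ground set the pairwise constraint fixes \<open>\<theta>{1,2} = x\<^sub>1x\<^sub>2\<close> and hence
  all of \<open>\<theta>\<close>: \<open>f\<^sup>+\<^sup>+\<close> is the multilinear extension \<open>F\<close>. A general marginal-feasible \<open>\<theta>\<close>
  with \<open>d = \<theta>{1,2}\<close> has value \<open>L - d g\<close>, while \<open>F(x) = L - x\<^sub>1x\<^sub>2 g\<close>, where
  \<open>g = f{1} + f{2} - f{} - f{1,2} \<ge> 0\<close> by submodularity and \<open>L\<close> is the linear part.
  Monotonicity gives \<open>L \<ge> (x\<^sub>1 + x\<^sub>2) g\<close>, and \<open>d \<ge> max 0 (x\<^sub>1 + x\<^sub>2 - 1)\<close> gives
  \<open>4x\<^sub>1x\<^sub>2 - 3d \<le> x\<^sub>1 + x\<^sub>2\<close>; together \<open>L - d g \<le> 4/3 (L - x\<^sub>1x\<^sub>2 g)\<close>.\<close>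

definition multilinear_ext :: "nat \<Rightarrow> (nat set \<Rightarrow> real) \<Rightarrow> (nat \<Rightarrow> real) \<Rightarrow> real" where
  "multilinear_ext n f x =
     (\<Sum>S\<in>Pow {1..n}. (\<Prod>i\<in>{1..n}. if i \<in> S then x i else 1 - x i) * f S)"

lemma atLeastAtMost_1_2: "{1..2::nat} = {1, 2}"
  by auto

lemma Pow_atLeastAtMost_1_2: "Pow {1..2::nat} = {{}, {1}, {2}, {1, 2}}"
  unfolding atLeastAtMost_1_2 by (simp add: Pow_insert insert_commute)

lemma sum_Pow_1_2: "(\<Sum>S\<in>Pow {1..2::nat}. h S) = h {} + h {1} + h {2} + h {1, 2}"
  unfolding Pow_atLeastAtMost_1_2 by (simp add: add_ac)

lemma sum_Pow_1_2_containing_1: "(\<Sum>S\<in>{S\<in>Pow {1..2::nat}. 1 \<in> S}. h S) = h {1} + h {1, 2}"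
proof -
  have "{S\<in>Pow {1..2::nat}. 1 \<in> S} = {{1}, {1, 2}}"
    unfolding Pow_atLeastAtMost_1_2 by auto
  then show ?thesis by simp
qed

lemma sum_Pow_1_2_containing_2: "(\<Sum>S\<in>{S\<in>Pow {1..2::nat}. 2 \<in> S}. h S) = h {2} + h {1, 2}"
proof -
  have "{S\<in>Pow {1..2::nat}. 2 \<in> S} = {{2}, {1, 2}}"
    unfolding Pow_atLeastAtMost_1_2 by auto
  then show ?thesis by (simp add: insert_commute)
qed

lemma sum_Pow_1_2_containing_1_2:
  "(\<Sum>S\<in>{S\<in>Pow {1..2::nat}. 1 \<in> S \<and> 2 \<in> S}. h S) = h {1, 2}"
proof -
  have "{S\<in>Pow {1..2::nat}. 1 \<in> S \<and> 2 \<in> S} = {{1, 2}}"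
    unfolding Pow_atLeastAtMost_1_2 by auto
  then show ?thesis by simp
qed

lemma prod_atLeastAtMost_1_2: "(\<Prod>i\<in>{1..2::nat}. g i) = g 1 * g 2"
  unfolding atLeastAtMost_1_2 by simp

lemma ball_atLeastAtMost_1_2: "(\<forall>i\<in>{1..2::nat}. P i) \<longleftrightarrow> P 1 \<and> P 2"
  unfolding atLeastAtMost_1_2 by simp

lemma ball_Pow_1_2: "(\<forall>S\<in>Pow {1..2::nat}. P S) \<longleftrightarrow> P {} \<and> P {1} \<and> P {2} \<and> P {1, 2}"
  unfolding Pow_atLeastAtMost_1_2 by simp

lemma marg_feasible_2_iff:
  "marg_feasible 2 x \<theta> \<longleftrightarrow>
     \<theta> {} \<ge> 0 \<and> \<theta> {1} \<ge> 0 \<and> \<theta> {2} \<ge> 0 \<and> \<theta> {1, 2} \<ge> 0 \<and>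
     \<theta> {} + \<theta> {1} + \<theta> {2} + \<theta> {1, 2} = 1 \<and>
     \<theta> {1} + \<theta> {1, 2} = x 1 \<and> \<theta> {2} + \<theta> {1, 2} = x 2"
  unfolding marg_feasible_def ball_atLeastAtMost_1_2 ball_Pow_1_2 sum_Pow_1_2
    sum_Pow_1_2_containing_1 sum_Pow_1_2_containing_2
  by blast

lemma pairwise_feasible_2_iff:
  "pairwise_feasible 2 x \<theta> \<longleftrightarrow> marg_feasible 2 x \<theta> \<and> \<theta> {1, 2} = x 1 * x 2"
  unfolding pairwise_feasible_def ball_atLeastAtMost_1_2 sum_Pow_1_2_containing_1_2 by simp

lemma multilinear_ext_2:
  "multilinear_ext 2 f x = (1 - x 1) * (1 - x 2) * f {} + x 1 * (1 - x 2) * f {1}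
     + (1 - x 1) * x 2 * f {2} + x 1 * x 2 * f {1, 2}"
  unfolding multilinear_ext_def sum_Pow_1_2 prod_atLeastAtMost_1_2 by simp

lemma pairwise_feasible_2_objective_eq:
  assumes "pairwise_feasible 2 x \<theta>"
  shows "(\<Sum>S\<in>Pow {1..2}. \<theta> S * f S) = multilinear_ext 2 f x"
proof -
  have "\<theta> {1, 2} = x 1 * x 2" "\<theta> {1} + \<theta> {1, 2} = x 1" "\<theta> {2} + \<theta> {1, 2} = x 2"
      "\<theta> {} + \<theta> {1} + \<theta> {2} + \<theta> {1, 2} = 1"
    using assms unfolding pairwise_feasible_2_iff marg_feasible_2_iff by simp_all
  then have "\<theta> {} = (1 - x 1) * (1 - x 2)" "\<theta> {1} = x 1 * (1 - x 2)"
      "\<theta> {2} = (1 - x 1) * x 2" "\<theta> {1, 2} = x 1 * x 2"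
    by (simp_all add: algebra_simps)
  then show ?thesis
    unfolding sum_Pow_1_2 multilinear_ext_2 by simp
qed

lemma pairwise_feasible_2_product:
  assumes "\<forall>i\<in>{1..2::nat}. 0 \<le> x i \<and> x i \<le> 1"
  shows "pairwise_feasible 2 x (\<lambda>S. \<Prod>i\<in>{1..2}. if i \<in> S then x i else 1 - x i)"
proof -
  have "0 \<le> x 1" "x 1 \<le> 1" "0 \<le> x 2" "x 2 \<le> 1"
    using assms by auto
  then have "0 \<le> (1 - x 1) * (1 - x 2)" "0 \<le> x 1 * (1 - x 2)" "0 \<le> (1 - x 1) * x 2"
      "0 \<le> x 1 * x 2"
    by simp_all
  then show ?thesis
    unfolding pairwise_feasible_2_iff marg_feasible_2_iff prod_atLeastAtMost_1_2
    by (simp add: algebra_simps)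
qed

lemma upper_pi_ext_2_eq_multilinear_ext:
  assumes "\<forall>i\<in>{1..2::nat}. 0 \<le> x i \<and> x i \<le> 1"
  shows "upper_pi_ext 2 f x = multilinear_ext 2 f x"
proof -
  have "{(\<Sum>S\<in>Pow {1..2}. \<theta> S * f S) | \<theta>. pairwise_feasible 2 x \<theta>} = {multilinear_ext 2 f x}"
  proof (intro equalityI subsetI)
    show "v \<in> {multilinear_ext 2 f x}"
      if "v \<in> {(\<Sum>S\<in>Pow {1..2}. \<theta> S * f S) | \<theta>. pairwise_feasible 2 x \<theta>}" for v
      using that pairwise_feasible_2_objective_eq by blast
    show "v \<in> {(\<Sum>S\<in>Pow {1..2}. \<theta> S * f S) | \<theta>. pairwise_feasible 2 x \<theta>}"
      if "v \<in> {multilinear_ext 2 f x}" for v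
      using that pairwise_feasible_2_product[OF assms] unfolding multilinear_ext_def
      by (auto intro!: exI[of _ "\<lambda>S. \<Prod>i\<in>{1..2}. if i \<in> S then x i else 1 - x i"])
  qed
  then show ?thesis
    unfolding upper_pi_ext_def by simp
qed

lemma four_mul_le_add:
  fixes a b :: real
  assumes "0 \<le> a" "0 \<le> b" "a + b \<le> 1"
  shows "4 * a * b \<le> a + b"
proof -
  have "4 * a * b \<le> (a + b)\<^sup>2"
    using sum_squares_ge_zero[of "a - b" 0] by (simp add: power2_eq_square algebra_simps)
  also have "\<dots> \<le> a + b"
    using assms by (simp add: power2_eq_square mult_left_le)
  finally show ?thesis .
qed

lemma four_mul_sub_three_le_add:
  fixes x1 x2 d :: real
  assumes "0 \<le> x1" "x1 \<le> 1" "0 \<le> x2" "x2 \<le> 1" "0 \<le> d" "x1 + x2 - 1 \<le> d"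
  shows "4 * x1 * x2 - 3 * d \<le> x1 + x2"
proof (cases "x1 + x2 \<le> 1")
  case True
  then show ?thesis
    using four_mul_le_add[of x1 x2] assms by linarith
next
  case False
  then have "4 * (1 - x1) * (1 - x2) \<le> (1 - x1) + (1 - x2)"
    using assms by (intro four_mul_le_add) auto
  then show ?thesis
    using False assms by (simp add: algebra_simps)
qed

lemma marg_feasible_2_objective_le:
  assumes "nonneg_setfun 2 f" "monotone_setfun 2 f" "submodular_setfun 2 f"
    and "marg_feasible 2 x \<theta>"
  shows "(\<Sum>S\<in>Pow {1..2}. \<theta> S * f S) \<le> 4/3 * multilinear_ext 2 f x"
proof -
  have f_empty: "0 \<le> f {}"
    using assms(1) unfolding nonneg_setfun_def by simp
  have f_mono: "f {} \<le> f {1}" "f {} \<le> f {2}" "f {1} \<le> f {1, 2}" "f {2} \<le> f {1, 2}"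
    using assms(2) unfolding monotone_setfun_def by auto
  have "{1} \<subseteq> {1..2::nat}" "{2} \<subseteq> {1..2::nat}"
    by auto
  then have "f ({1} \<inter> {2}) + f ({1} \<union> {2}) \<le> f {1} + f {2}"
    using assms(3) unfolding submodular_setfun_def by blast
  then have f_submod: "f {} + f {1, 2} \<le> f {1} + f {2}"
    by (simp add: insert_commute)
  have \<theta>: "0 \<le> \<theta> {}" "0 \<le> \<theta> {1}" "0 \<le> \<theta> {2}" "0 \<le> \<theta> {1, 2}"
      "\<theta> {} + \<theta> {1} + \<theta> {2} + \<theta> {1, 2} = 1"
      "\<theta> {1} + \<theta> {1, 2} = x 1" "\<theta> {2} + \<theta> {1, 2} = x 2"
    using assms(4) unfolding marg_feasible_2_iff by simp_all
  define d where "d = \<theta> {1, 2}"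
  define g where "g = f {1} + f {2} - f {} - f {1, 2}"
  define L where "L = f {} + x 1 * (f {1} - f {}) + x 2 * (f {2} - f {})"
  have objective: "(\<Sum>S\<in>Pow {1..2}. \<theta> S * f S) = L - d * g"
  proof -
    have \<theta>_values: "\<theta> {} = 1 - x 1 - x 2 + d" "\<theta> {1} = x 1 - d" "\<theta> {2} = x 2 - d"
        "\<theta> {1, 2} = d"
      using \<theta> unfolding d_def by linarith+
    show ?thesis
      unfolding sum_Pow_1_2 \<theta>_values L_def g_def by (simp add: algebra_simps)
  qed
  have multilinear: "multilinear_ext 2 f x = L - x 1 * x 2 * g"
    unfolding multilinear_ext_2 L_def g_def by (simp add: algebra_simps)
  have "x 1 * g \<le> x 1 * (f {1} - f {})" "x 2 * g \<le> x 2 * (f {2} - f {})"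
    using \<theta> f_mono unfolding g_def by (auto intro!: mult_left_mono)
  then have L_ge: "(x 1 + x 2) * g \<le> L"
    unfolding L_def using f_empty by (simp add: algebra_simps)
  have g_nonneg: "0 \<le> g"
    using f_submod unfolding g_def by simp
  have coefficient: "4 * x 1 * x 2 - 3 * d \<le> x 1 + x 2"
    using \<theta> unfolding d_def by (intro four_mul_sub_three_le_add) auto
  have "(4 * x 1 * x 2 - 3 * d) * g \<le> (x 1 + x 2) * g"
    using coefficient g_nonneg by (rule mult_right_mono)
  with L_ge have "(4 * x 1 * x 2 - 3 * d) * g \<le> L"
    by linarith
  then show ?thesis
    unfolding objective multilinear by (simp add: algebra_simps)
qed

theorem mainTheorem4:
  fixes f :: "nat set \<Rightarrow> real" and x :: "nat \<Rightarrow> real"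
  assumes "nonneg_setfun 2 f" and "monotone_setfun 2 f" and "submodular_setfun 2 f"
    and "\<forall>i\<in>{1..2::nat}. 0 \<le> x i \<and> x i \<le> 1"
  shows "concave_closure 2 f x \<le> 4/3 * upper_pi_ext 2 f x"
proof -
  have "\<exists>\<theta>. marg_feasible 2 x \<theta>"
    using pairwise_feasible_2_product[OF assms(4)] unfolding pairwise_feasible_def by blast
  then have "concave_closure 2 f x \<le> 4/3 * multilinear_ext 2 f x"
    unfolding concave_closure_def
    using marg_feasible_2_objective_le[OF assms(1-3)] by (intro cSup_least) blast+
  then show ?thesis
    using upper_pi_ext_2_eq_multilinear_ext[OF assms(4)] by simp
qed

end
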